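(* Let $1\le m\le N-1$ be integers, let $A\subset\Lambda$ be a measurable set of positive measure, and let $\gamma:A\to(0,\infty)$ be measurable. Suppose that $$P(x_1,\dots,x_N)\ge\gamma(x_N)\,\rho^{(N-1)}(x_1,\dots,x_{N-1})$$ for a.e. $(x_1,\dots,x_N)\in\Lambda^{N-1}\times A$. Then $$P(x_1,\dots,x_N)\ge\gamma(x_N)\gamma(x_{N-1})\cdots\gamma(x_{m+1})\,\rho^{(m)}(x_1,\dots,x_m)$$ for a.e. $(x_1,\dots,x_N)\in\Lambda^m\times A^{N-m}$.
   Context: $(\Lambda;dx)$ is a complete $\sigma$-finite measure space with non-zero measure $dx$; $d^kx$ denotes the completion of $dx^{\otimes k}$ on $\Lambda^k$, and "a.e." refers to these measures. $N\ge2$ and $P$ is a symmetric probability density on $\Lambda^N$: a nonnegative, measurable, symmetric function with $\int_{\Lambda^N}P\,d^Nx=1$. For $1\le m<N$, the marginal density is $\rho^{(m)}(x_1,\dots,x_m):=\int_{\Lambda^{N-m}}P(x_1,\dots,x_N)\,dx_{m+1}\cdots dx_N$ (defined a.e. on $\Lambda^m$). *)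

theory Defs
  imports "HOL-Analysis.Analysis"
begin

text \<open>Lambda^k is modelled as the product space PiM I (\<lambda>_. M) over an index set I of
  size k (coordinates x_1..x_N are x 0 .. x (N-1)); d^k x is its completion.\<close>

definition cprod :: "'a measure \<Rightarrow> nat set \<Rightarrow> (nat \<Rightarrow> 'a) measure" where
  "cprod M I = completion (PiM I (\<lambda>_. M))"

text \<open>Marginal density rho^(m)(x_1,...,x_m) = integral of P over x_{m+1},...,x_N
  (only the coordinates x 0 .. x (m-1) of the argument are used).\<close>

definition marginal :: "'a measure \<Rightarrow> nat \<Rightarrow> ((nat \<Rightarrow> 'a) \<Rightarrow> real) \<Rightarrow> nat \<Rightarrow> (nat \<Rightarrow> 'a) \<Rightarrow> ennreal" where
  "marginal M N P m x =
     (\<integral>\<^sup>+ y. ennreal (P (merge {..<m} {m..<N} (x, y))) \<partial>(cprod M {m..<N}))"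

definition sym_prob_density :: "'a measure \<Rightarrow> nat \<Rightarrow> ((nat \<Rightarrow> 'a) \<Rightarrow> real) \<Rightarrow> bool" where
  "sym_prob_density M N P \<longleftrightarrow>
     P \<in> borel_measurable (cprod M {..<N}) \<and>
     (\<forall>x\<in>space (cprod M {..<N}). 0 \<le> P x) \<and>
     (\<forall>x\<in>space (cprod M {..<N}). \<forall>\<sigma>. \<sigma> permutes {..<N} \<longrightarrow> P (x \<circ> \<sigma>) = P x) \<and>
     (\<integral>\<^sup>+ x. ennreal (P x) \<partial>(cprod M {..<N})) = 1"

end

theory Submission
  imports Defs
begin

text \<open>Number the coordinates 0, ..., N-1 and write rho_k for the marginal density in the first
  k of them. Composing the hypothesis with the transposition of the coordinates k and N-1 and using
  the symmetry of P gives gamma(x_k) rho_(N-1)(x with x_k and x_(N-1) exchanged) <= P(x) a.e.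
  Integrating both sides over x_(k+1), ..., x_(N-1) (Tonelli) turns this into
  gamma(x_k) rho_k <= rho_(k+1) a.e., and chaining these inequalities for k = m, ..., N-2 with the
  hypothesis gives the claim. Tonelli needs measurability for the uncompleted product measure, so
  P is first replaced by a Borel function that is still symmetric everywhere and agrees with P
  almost everywhere.\<close>

lemma prod_mult_le_of_chain:
  fixes c r :: "nat \<Rightarrow> ennreal"
  assumes "m \<le> n" and "\<And>k. m \<le> k \<Longrightarrow> k < n \<Longrightarrow> c k * r k \<le> r (Suc k)"
  shows "(\<Prod>i\<in>{m..<n}. c i) * r m \<le> r n"
  using assms(1)
proof (induction rule: dec_induct)
  case (step k)
  have "(\<Prod>i\<in>{m..<Suc k}. c i) * r m = c k * ((\<Prod>i\<in>{m..<k}. c i) * r m)"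
    using step.hyps(1) by (simp add: prod.atLeastLessThan_Suc mult_ac)
  also have "\<dots> \<le> c k * r k"
    using step.IH by (rule mult_left_mono) simp
  also have "\<dots> \<le> r (Suc k)"
    using step.hyps by (intro assms(2)) auto
  finally show ?case .
qed simp

lemma marginal_eq_nn_integral_PiM:
  "marginal M N f k x = (\<integral>\<^sup>+ y. ennreal (f (merge {..<k} {k..<N} (x, y))) \<partial>PiM {k..<N} (\<lambda>_. M))"
  unfolding marginal_def cprod_def by (rule nn_integral_completion)

lemma measurable_merge_left_fixed:
  assumes "x \<in> space (PiM I M)"
  shows "(\<lambda>y. merge I J (x, y)) \<in> PiM J M \<rightarrow>\<^sub>M PiM (I \<union> J) M"
  using measurable_compose[OF measurable_Pair1'[OF assms] measurable_merge] by simp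

context sigma_finite_measure
begin

lemma product_sigma_finite_const: "product_sigma_finite (\<lambda>_::'i. M)"
  by (simp add: product_sigma_finite_def sigma_finite_measure_axioms)

lemma measurable_PiM_permute:
  assumes "\<sigma> permutes I"
  shows "(\<lambda>x. x \<circ> \<sigma>) \<in> PiM I (\<lambda>_. M) \<rightarrow>\<^sub>M PiM I (\<lambda>_. M)"
proof -
  have "(\<lambda>x i. x (\<sigma> i)) \<in> PiM I (\<lambda>_. M) \<rightarrow>\<^sub>M PiM I (\<lambda>_. M)"
  proof (rule measurable_PiM_single')
    fix i assume "i \<in> I"
    then show "(\<lambda>x. x (\<sigma> i)) \<in> PiM I (\<lambda>_. M) \<rightarrow>\<^sub>M M"
      using assms by (simp add: permutes_in_image)
  qed (use assms in \<open>auto simp: space_PiM PiE_iff permutes_in_image extensional_def permutes_not_in\<close>)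
  then show ?thesis by (simp add: comp_def)
qed

lemma distr_PiM_permute:
  assumes I: "finite I" and \<sigma>: "\<sigma> permutes I"
  shows "distr (PiM I (\<lambda>_. M)) (PiM I (\<lambda>_. M)) (\<lambda>x. x \<circ> \<sigma>) = PiM I (\<lambda>_. M)"
proof -
  interpret product_sigma_finite "\<lambda>_. M" by (rule product_sigma_finite_const)
  have \<sigma>': "inv \<sigma> permutes I" using \<sigma> by (rule permutes_inv)
  show ?thesis
  proof (rule PiM_eqI[OF I])
    fix A assume A: "\<And>i. i \<in> I \<Longrightarrow> A i \<in> sets M"
    have "(\<lambda>x. x \<circ> \<sigma>) -` Pi\<^sub>E I A \<inter> space (PiM I (\<lambda>_. M)) = Pi\<^sub>E I (\<lambda>j. A (inv \<sigma> j))"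
      using A[THEN sets.sets_into_space] \<sigma> \<sigma>'
      by (auto simp: space_PiM PiE_iff extensional_def permutes_in_image permutes_not_in
          permutes_inverses[OF \<sigma>])
         (metis permutes_in_image[OF \<sigma>] permutes_in_image[OF \<sigma>'] permutes_inverses[OF \<sigma>] subsetD)+
    then have "emeasure (distr (PiM I (\<lambda>_. M)) (PiM I (\<lambda>_. M)) (\<lambda>x. x \<circ> \<sigma>)) (Pi\<^sub>E I A)
        = (\<Prod>j\<in>I. emeasure M (A (inv \<sigma> j)))"
      using A \<sigma>' by (simp add: emeasure_distr[OF measurable_PiM_permute[OF \<sigma>]] sets_PiM_I_finite I
          emeasure_PiM permutes_in_image)
    also have "\<dots> = (\<Prod>i\<in>I. emeasure M (A i))"
      using prod.permute[OF \<sigma>', of "\<lambda>i. emeasure M (A i)"] by (simp add: comp_def)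
    finally show "emeasure (distr (PiM I (\<lambda>_. M)) (PiM I (\<lambda>_. M)) (\<lambda>x. x \<circ> \<sigma>)) (Pi\<^sub>E I A)
        = (\<Prod>i\<in>I. emeasure M (A i))" .
  qed simp
qed

lemma AE_PiM_permute:
  assumes "finite I" "\<sigma> permutes I" "AE x in PiM I (\<lambda>_. M). Q x"
  shows "AE x in PiM I (\<lambda>_. M). Q (x \<circ> \<sigma>)"
proof -
  have "AE x in distr (PiM I (\<lambda>_. M)) (PiM I (\<lambda>_. M)) (\<lambda>x. x \<circ> \<sigma>). Q x"
    using assms by (simp only: distr_PiM_permute)
  then show ?thesis by (rule AE_distrD[OF measurable_PiM_permute[OF assms(2)]])
qed

lemma AE_PiM_merge:
  assumes "I \<inter> J = {}" "finite I" "finite J" "AE z in PiM (I \<union> J) (\<lambda>_. M). Q z"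
  shows "AE x in PiM I (\<lambda>_. M). AE y in PiM J (\<lambda>_. M). Q (merge I J (x, y))"
proof -
  interpret product_sigma_finite "\<lambda>_. M" by (rule product_sigma_finite_const)
  interpret I: finite_product_sigma_finite "\<lambda>_. M" I by standard fact
  interpret J: finite_product_sigma_finite "\<lambda>_. M" J by standard fact
  interpret pair_sigma_finite "PiM I (\<lambda>_. M)" "PiM J (\<lambda>_. M)" ..
  have "AE z in distr (PiM I (\<lambda>_. M) \<Otimes>\<^sub>M PiM J (\<lambda>_. M)) (PiM (I \<union> J) (\<lambda>_. M)) (merge I J). Q z"
    using assms by (simp only: distr_merge)
  then have "AE p in PiM I (\<lambda>_. M) \<Otimes>\<^sub>M PiM J (\<lambda>_. M). Q (merge I J p)"
    by (rule AE_distrD[OF measurable_merge])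
  then show ?thesis by (rule AE_pair)
qed

lemma AE_PiM_restrict:
  assumes K: "finite K" and JK: "J \<subseteq> K" and Q: "AE x in PiM J (\<lambda>_. M). Q x"
  shows "AE x in PiM K (\<lambda>_. M). Q (restrict x J)"
proof -
  interpret product_sigma_finite "\<lambda>_. M" by (rule product_sigma_finite_const)
  have K_split: "J \<union> (K - J) = K" using JK by auto
  from Q obtain N where N: "N \<in> null_sets (PiM J (\<lambda>_. M))" "{x \<in> space (PiM J (\<lambda>_. M)). \<not> Q x} \<subseteq> N"
    by (auto simp: eventually_ae_filter)
  define N' where "N' = (\<lambda>x. restrict x J) -` N \<inter> space (PiM K (\<lambda>_. M))"
  have N'_sets: "N' \<in> sets (PiM (J \<union> (K - J)) (\<lambda>_. M))"
    unfolding N'_def K_split using N(1) measurable_restrict_subset[OF JK] by (auto intro: measurable_sets)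
  \<comment> \<open>Every section of \<open>N'\<close> is empty or everything, according as the base point lies in \<open>N\<close>.\<close>
  have "emeasure (PiM K (\<lambda>_. M)) N' = emeasure (PiM (J \<union> (K - J)) (\<lambda>_. M)) N'"
    by (simp only: K_split)
  also have "\<dots> = (\<integral>\<^sup>+ x. emeasure (PiM (K - J) (\<lambda>_. M))
      ((\<lambda>y. merge J (K - J) (x, y)) -` N' \<inter> space (PiM (K - J) (\<lambda>_. M))) \<partial>PiM J (\<lambda>_. M))"
    using K JK N'_sets by (intro emeasure_fold_integral) (auto intro: finite_subset)
  also have "\<dots> = (\<integral>\<^sup>+ x. emeasure (PiM (K - J) (\<lambda>_. M)) (space (PiM (K - J) (\<lambda>_. M)))
      * indicator N x \<partial>PiM J (\<lambda>_. M))"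
  proof (rule nn_integral_cong)
    fix x assume x: "x \<in> space (PiM J (\<lambda>_. M))"
    have "restrict (merge J (K - J) (x, y)) J = x" for y
      using x by (simp add: space_PiM PiE_def extensional_restrict)
    moreover have "merge J (K - J) (x, y) \<in> space (PiM K (\<lambda>_. M))" if "y \<in> space (PiM (K - J) (\<lambda>_. M))" for y
      using x that JK by (auto simp: space_PiM PiE_iff merge_def extensional_def)
    ultimately have "(\<lambda>y. merge J (K - J) (x, y)) -` N' \<inter> space (PiM (K - J) (\<lambda>_. M))
        = (if x \<in> N then space (PiM (K - J) (\<lambda>_. M)) else {})"
      by (auto simp: N'_def)
    then show "emeasure (PiM (K - J) (\<lambda>_. M)) ((\<lambda>y. merge J (K - J) (x, y)) -` N' \<inter> space (PiM (K - J) (\<lambda>_. M)))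
        = emeasure (PiM (K - J) (\<lambda>_. M)) (space (PiM (K - J) (\<lambda>_. M))) * indicator N x"
      by (simp add: indicator_def)
  qed
  also have "\<dots> = 0" using N(1) by (rule nn_integral_null_set)
  finally have "N' \<in> null_sets (PiM K (\<lambda>_. M))"
    using N'_sets K_split by auto
  then show ?thesis
    using N(2) measurable_space[OF measurable_restrict_subset[OF JK]] by (auto simp: N'_def intro!: AE_I')
qed

lemma AE_PiM_section:
  assumes "finite K" "J \<subseteq> K" "AE z in PiM K (\<lambda>_. M). Q z"
  shows "AE x in PiM K (\<lambda>_. M). AE y in PiM (K - J) (\<lambda>_. M). Q (merge J (K - J) (x, y))"
proof -
  have "J \<union> (K - J) = K" using assms(2) by auto
  then have "AE z in PiM (J \<union> (K - J)) (\<lambda>_. M). Q z"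
    using assms(3) by (simp only:)
  then have "AE x in PiM J (\<lambda>_. M). AE y in PiM (K - J) (\<lambda>_. M). Q (merge J (K - J) (x, y))"
    using assms(1,2) by (intro AE_PiM_merge) (auto intro: finite_subset)
  from AE_PiM_restrict[OF assms(1,2) this] show ?thesis
    by simp
qed

lemma symmetric_borel_representative:
  fixes P :: "('i \<Rightarrow> 'a) \<Rightarrow> real"
  assumes I: "finite I" and P: "P \<in> borel_measurable (completion (PiM I (\<lambda>_. M)))"
    and P_sym: "\<And>x \<sigma>. x \<in> space (PiM I (\<lambda>_. M)) \<Longrightarrow> \<sigma> permutes I \<Longrightarrow> P (x \<circ> \<sigma>) = P x"
  obtains f where "f \<in> borel_measurable (PiM I (\<lambda>_. M))"
    and "\<And>x \<sigma>. x \<in> space (PiM I (\<lambda>_. M)) \<Longrightarrow> \<sigma> permutes I \<Longrightarrow> f (x \<circ> \<sigma>) = f x"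
    and "AE x in PiM I (\<lambda>_. M). P x = f x"
proof -
  let ?L = "PiM I (\<lambda>_. M)"
  obtain g where g: "g \<in> borel_measurable ?L" and Pg: "AE x in ?L. P x = g x"
    using completion_ex_borel_measurable_real[OF P] by blast
  \<comment> \<open>The set where \<open>g\<close> is symmetric is itself permutation invariant, so \<open>g\<close> restricted to it is symmetric.\<close>
  define S where "S = {x \<in> space ?L. \<forall>\<sigma>\<in>{\<sigma>. \<sigma> permutes I}. g (x \<circ> \<sigma>) = g x}"
  define f where "f x = (if x \<in> S then g x else 0)" for x
  have "S \<in> sets ?L"
    unfolding S_def
  proof (rule sets.sets_Collect_finite_All')
    fix \<sigma> assume "\<sigma> \<in> {\<sigma>. \<sigma> permutes I}"
    then have "(\<lambda>x. g (x \<circ> \<sigma>)) \<in> borel_measurable ?L"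
      using measurable_compose[OF measurable_PiM_permute g] by simp
    then show "{x \<in> space ?L. g (x \<circ> \<sigma>) = g x} \<in> sets ?L"
      using g by measurable
  qed (auto simp: I finite_permutations intro: permutes_id)
  then have "f \<in> borel_measurable ?L"
    unfolding f_def using g by (intro measurable_If_set) auto
  moreover have S_perm: "x \<circ> \<tau> \<in> S" if "x \<in> S" "\<tau> permutes I" for x \<tau>
    using that measurable_space[OF measurable_PiM_permute[OF that(2)]]
    by (auto simp: S_def o_assoc[symmetric] permutes_compose)
  have "f (x \<circ> \<tau>) = f x" if x: "x \<in> space ?L" and \<tau>: "\<tau> permutes I" for x \<tau>
  proof -
    have "x \<circ> \<tau> \<circ> inv \<tau> = x"
      using permutes_inv_o(1)[OF \<tau>] by (simp add: o_assoc[symmetric])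
    then have "x \<circ> \<tau> \<in> S \<longleftrightarrow> x \<in> S"
      using S_perm[of "x \<circ> \<tau>" "inv \<tau>"] S_perm[of x \<tau>] \<tau> permutes_inv[OF \<tau>] by auto
    then show ?thesis
      using \<tau> by (auto simp: f_def S_def)
  qed
  moreover have "AE x in ?L. \<forall>\<sigma>\<in>{\<sigma>. \<sigma> permutes I}. P (x \<circ> \<sigma>) = g (x \<circ> \<sigma>)"
    using Pg by (intro AE_finite_allI AE_PiM_permute) (auto simp: I finite_permutations)
  then have "AE x in ?L. P x = f x"
  proof (rule AE_mp[OF _ AE_I2], intro impI)
    fix x assume x: "x \<in> space ?L" and Pg_perm: "\<forall>\<sigma>\<in>{\<sigma>. \<sigma> permutes I}. P (x \<circ> \<sigma>) = g (x \<circ> \<sigma>)"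
    have "P x = g x"
      using Pg_perm[rule_format, of id] by simp
    moreover have "x \<in> S"
      using x Pg_perm P_sym \<open>P x = g x\<close> by (auto simp: S_def)
    ultimately show "P x = f x" by (simp add: f_def)
  qed
  ultimately show ?thesis using that by blast
qed

lemma cmult_marginal_last_eq:
  assumes f: "f \<in> borel_measurable (PiM {..<Suc n} (\<lambda>_. M))" and x: "x \<in> space (PiM {..<Suc n} (\<lambda>_. M))"
  shows "c * marginal M (Suc n) f n x = (\<integral>\<^sup>+ t. c * ennreal (f (x(n := t))) \<partial>M)"
proof -
  interpret product_sigma_finite "\<lambda>_. M" by (rule product_sigma_finite_const)
  have "(\<lambda>t. x(n := t)) \<in> M \<rightarrow>\<^sub>M PiM {..<Suc n} (\<lambda>_. M)"
    using x by (intro measurable_fun_upd[where J = "{..<Suc n}"]) auto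
  then have upd: "(\<lambda>t. ennreal (f (x(n := t)))) \<in> borel_measurable M"
    using f by measurable
  have "marginal M (Suc n) f n x = (\<integral>\<^sup>+ y. ennreal (f (merge {..<n} {n} (x, y))) \<partial>PiM {n} (\<lambda>_. M))"
    by (simp add: marginal_eq_nn_integral_PiM)
  also have "\<dots> = (\<integral>\<^sup>+ y. ennreal (f (x(n := y n))) \<partial>PiM {n} (\<lambda>_. M))"
    using x by (intro nn_integral_cong) (auto simp: space_PiM PiE_def extensional_def lessThan_Suc
        intro!: arg_cong[where f = f])
  also have "\<dots> = (\<integral>\<^sup>+ t. ennreal (f (x(n := t))) \<partial>M)"
    using upd by (rule product_nn_integral_singleton)
  finally show ?thesis
    using upd by (simp add: nn_integral_cmult)
qed

lemma cmult_marginal_eq_iterated: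
  assumes f: "f \<in> borel_measurable (PiM {..<N} (\<lambda>_. M))" and x: "x \<in> space (PiM {..<N} (\<lambda>_. M))"
    and k: "k < N"
  shows "c * marginal M N f k x = (\<integral>\<^sup>+ y. (\<integral>\<^sup>+ t. c * ennreal (f (merge {..<k} {k..<N} (x, y(k := t)))) \<partial>M)
      \<partial>PiM {Suc k..<N} (\<lambda>_. M))"
proof -
  interpret product_sigma_finite "\<lambda>_. M" by (rule product_sigma_finite_const)
  have split: "{..<k} \<union> {k..<N} = {..<N}" and insert: "insert k {Suc k..<N} = {k..<N}"
    using k by (simp add: ivl_disj_un_one(2), force)
  have "restrict x {..<k} \<in> space (PiM {..<k} (\<lambda>_. M))"
    using k by (intro measurable_space[OF measurable_restrict_subset x]) simp
  then have "(\<lambda>v. merge {..<k} {k..<N} (x, v)) \<in> PiM {k..<N} (\<lambda>_. M) \<rightarrow>\<^sub>M PiM {..<N} (\<lambda>_. M)"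
    using measurable_merge_left_fixed[of "restrict x {..<k}" "{..<k}" "\<lambda>_. M" "{k..<N}"] split by simp
  then have h: "(\<lambda>v. ennreal (f (merge {..<k} {k..<N} (x, v)))) \<in> borel_measurable (PiM {k..<N} (\<lambda>_. M))"
    using f by measurable
  have "c * marginal M N f k x = (\<integral>\<^sup>+ v. c * ennreal (f (merge {..<k} {k..<N} (x, v))) \<partial>PiM {k..<N} (\<lambda>_. M))"
    using h by (simp add: marginal_eq_nn_integral_PiM nn_integral_cmult)
  also have "\<dots> = (\<integral>\<^sup>+ y. (\<integral>\<^sup>+ t. c * ennreal (f (merge {..<k} {k..<N} (x, y(k := t)))) \<partial>M)
      \<partial>PiM {Suc k..<N} (\<lambda>_. M))"
    using product_nn_integral_insert[of "{Suc k..<N}" k] h insert by simp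
  finally show ?thesis .
qed

lemma marginal_last_transpose_eq:
  fixes f :: "(nat \<Rightarrow> 'a) \<Rightarrow> real"
  assumes f: "f \<in> borel_measurable (PiM {..<Suc n} (\<lambda>_. M))"
    and f_sym: "\<And>x \<sigma>. x \<in> space (PiM {..<Suc n} (\<lambda>_. M)) \<Longrightarrow> \<sigma> permutes {..<Suc n} \<Longrightarrow> f (x \<circ> \<sigma>) = f x"
    and k: "k < n" and x: "x \<in> space (PiM {..<Suc n} (\<lambda>_. M))"
    and y: "y \<in> space (PiM {Suc k..<Suc n} (\<lambda>_. M))"
  shows "c * marginal M (Suc n) f n (merge {..<Suc k} {Suc k..<Suc n} (x, y) \<circ> Transposition.transpose k n)
    = (\<integral>\<^sup>+ t. c * ennreal (f (merge {..<k} {k..<Suc n} (x, y(k := t)))) \<partial>M)"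
proof -
  let ?\<sigma> = "Transposition.transpose k n"
  let ?z = "merge {..<Suc k} {Suc k..<Suc n} (x, y) \<circ> ?\<sigma>"
  have \<sigma>: "?\<sigma> permutes {..<Suc n}"
    using k by (intro permutes_swap_id) auto
  have "merge {..<Suc k} {Suc k..<Suc n} (x, y) \<in> space (PiM {..<Suc n} (\<lambda>_. M))"
    using x y k by (auto simp: space_PiM PiE_iff merge_def extensional_def)
  then have z: "?z \<in> space (PiM {..<Suc n} (\<lambda>_. M))"
    by (rule measurable_space[OF measurable_PiM_permute[OF \<sigma>]])
  have "c * marginal M (Suc n) f n ?z = (\<integral>\<^sup>+ t. c * ennreal (f (?z(n := t))) \<partial>M)"
    by (rule cmult_marginal_last_eq[OF f z])
  also have "\<dots> = (\<integral>\<^sup>+ t. c * ennreal (f (merge {..<k} {k..<Suc n} (x, y(k := t)))) \<partial>M)"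
  proof (rule nn_integral_cong)
    fix t assume t: "t \<in> space M"
    have "?z(n := t) \<in> space (PiM {..<Suc n} (\<lambda>_. M))"
      using z t by (auto simp: space_PiM PiE_iff extensional_def)
    moreover have "?z(n := t) \<circ> ?\<sigma> = merge {..<k} {k..<Suc n} (x, y(k := t))"
      using k by (auto simp: fun_eq_iff merge_def Transposition.transpose_def)
    ultimately show "c * ennreal (f (?z(n := t))) = c * ennreal (f (merge {..<k} {k..<Suc n} (x, y(k := t))))"
      using f_sym[OF _ \<sigma>] by metis
  qed
  finally show ?thesis .
qed

lemma marginal_lower_bound_step:
  fixes f :: "(nat \<Rightarrow> 'a) \<Rightarrow> real" and c :: "'a \<Rightarrow> ennreal"
  assumes f: "f \<in> borel_measurable (PiM {..<Suc n} (\<lambda>_. M))"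
    and f_sym: "\<And>x \<sigma>. x \<in> space (PiM {..<Suc n} (\<lambda>_. M)) \<Longrightarrow> \<sigma> permutes {..<Suc n} \<Longrightarrow> f (x \<circ> \<sigma>) = f x"
    and k: "k < n"
    and last: "AE x in PiM {..<Suc n} (\<lambda>_. M). x n \<in> A \<longrightarrow> c (x n) * marginal M (Suc n) f n x \<le> ennreal (f x)"
  shows "AE x in PiM {..<Suc n} (\<lambda>_. M). x k \<in> A \<longrightarrow>
    c (x k) * marginal M (Suc n) f k x \<le> marginal M (Suc n) f (Suc k) x"
proof -
  let ?L = "PiM {..<Suc n} (\<lambda>_. M)" and ?\<sigma> = "Transposition.transpose k n"
  let ?merge = "\<lambda>x y. merge {..<Suc k} {Suc k..<Suc n} (x, y)"
  have \<sigma>: "?\<sigma> permutes {..<Suc n}"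
    using k by (intro permutes_swap_id) auto
  \<comment> \<open>By symmetry, the hypothesis on the last coordinate transfers to coordinate \<open>k\<close>.\<close>
  have swapped: "AE x in ?L. x k \<in> A \<longrightarrow> c (x k) * marginal M (Suc n) f n (x \<circ> ?\<sigma>) \<le> ennreal (f x)"
    using AE_PiM_permute[OF finite_lessThan \<sigma> last]
    by (rule AE_mp[OF _ AE_I2]) (simp add: f_sym[OF _ \<sigma>])
  have J: "{..<Suc k} \<subseteq> {..<Suc n}" and D: "{..<Suc n} - {..<Suc k} = {Suc k..<Suc n}"
    using k by auto
  from AE_PiM_section[OF finite_lessThan J swapped] have "AE x in ?L. AE y in PiM {Suc k..<Suc n} (\<lambda>_. M).
      ?merge x y k \<in> A \<longrightarrow> c (?merge x y k) * marginal M (Suc n) f n (?merge x y \<circ> ?\<sigma>) \<le> ennreal (f (?merge x y))"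
    unfolding D .
  moreover have merge_k: "?merge x y k = x k" for x y
    by (simp add: merge_def)
  ultimately have sections: "AE x in ?L. AE y in PiM {Suc k..<Suc n} (\<lambda>_. M).
      x k \<in> A \<longrightarrow> c (x k) * marginal M (Suc n) f n (?merge x y \<circ> ?\<sigma>) \<le> ennreal (f (?merge x y))"
    by (simp add: merge_k)
  show ?thesis
    using sections
  proof (rule AE_mp[OF _ AE_I2], intro impI)
    fix x assume x: "x \<in> space ?L" and xk: "x k \<in> A" and bound: "AE y in PiM {Suc k..<Suc n} (\<lambda>_. M).
      x k \<in> A \<longrightarrow> c (x k) * marginal M (Suc n) f n (?merge x y \<circ> ?\<sigma>) \<le> ennreal (f (?merge x y))"
    have "c (x k) * marginal M (Suc n) f k x
        = (\<integral>\<^sup>+ y. (\<integral>\<^sup>+ t. c (x k) * ennreal (f (merge {..<k} {k..<Suc n} (x, y(k := t)))) \<partial>M)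
            \<partial>PiM {Suc k..<Suc n} (\<lambda>_. M))"
      using k by (intro cmult_marginal_eq_iterated[OF f x]) simp
    also have "\<dots> = (\<integral>\<^sup>+ y. c (x k) * marginal M (Suc n) f n (?merge x y \<circ> ?\<sigma>) \<partial>PiM {Suc k..<Suc n} (\<lambda>_. M))"
      by (intro nn_integral_cong) (simp add: marginal_last_transpose_eq[OF f f_sym k x])
    also have "\<dots> \<le> (\<integral>\<^sup>+ y. ennreal (f (?merge x y)) \<partial>PiM {Suc k..<Suc n} (\<lambda>_. M))"
      using bound xk by (intro nn_integral_mono_AE) auto
    also have "\<dots> = marginal M (Suc n) f (Suc k) x"
      by (simp add: marginal_eq_nn_integral_PiM)
    finally show "c (x k) * marginal M (Suc n) f k x \<le> marginal M (Suc n) f (Suc k) x" .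
  qed
qed

lemma AE_prod_mult_marginal_le:
  fixes f :: "(nat \<Rightarrow> 'a) \<Rightarrow> real" and c :: "'a \<Rightarrow> ennreal"
  assumes f: "f \<in> borel_measurable (PiM {..<Suc n} (\<lambda>_. M))"
    and f_sym: "\<And>x \<sigma>. x \<in> space (PiM {..<Suc n} (\<lambda>_. M)) \<Longrightarrow> \<sigma> permutes {..<Suc n} \<Longrightarrow> f (x \<circ> \<sigma>) = f x"
    and mn: "m \<le> n"
    and last: "AE x in PiM {..<Suc n} (\<lambda>_. M). x n \<in> A \<longrightarrow> c (x n) * marginal M (Suc n) f n x \<le> ennreal (f x)"
  shows "AE x in PiM {..<Suc n} (\<lambda>_. M). (\<forall>i\<in>{m..<Suc n}. x i \<in> A) \<longrightarrow>
    (\<Prod>i\<in>{m..<Suc n}. c (x i)) * marginal M (Suc n) f m x \<le> ennreal (f x)"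
proof -
  have "AE x in PiM {..<Suc n} (\<lambda>_. M). \<forall>k\<in>{m..<n}. x k \<in> A \<longrightarrow>
      c (x k) * marginal M (Suc n) f k x \<le> marginal M (Suc n) f (Suc k) x"
    using marginal_lower_bound_step[OF f f_sym _ last] by (intro AE_finite_allI) auto
  then show ?thesis
    using last
  proof eventually_elim
    case (elim x)
    let ?r = "\<lambda>k. if k \<le> n then marginal M (Suc n) f k x else ennreal (f x)"
    have "(\<Prod>i\<in>{m..<Suc n}. c (x i)) * ?r m \<le> ?r (Suc n)"
      if A: "\<forall>i\<in>{m..<Suc n}. x i \<in> A"
    proof (rule prod_mult_le_of_chain)
      fix k assume "m \<le> k" "k < Suc n"
      then consider "k < n" | "k = n"
        by linarith
      then show "c (x k) * ?r k \<le> ?r (Suc k)"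
        using elim A \<open>m \<le> k\<close> by cases simp_all
    qed (use mn in simp)
    then show ?case
      using mn by simp
  qed
qed

lemma AE_marginal_cong:
  assumes "AE x in PiM {..<N} (\<lambda>_. M). P x = f x" and "k \<le> N"
  shows "AE x in PiM {..<N} (\<lambda>_. M). marginal M N P k x = marginal M N f k x"
proof -
  have "{..<k} \<subseteq> {..<N}" and D: "{..<N} - {..<k} = {k..<N}"
    using assms(2) by auto
  from AE_PiM_section[OF finite_lessThan this(1) assms(1)]
  have "AE x in PiM {..<N} (\<lambda>_. M). AE y in PiM {k..<N} (\<lambda>_. M).
      P (merge {..<k} {k..<N} (x, y)) = f (merge {..<k} {k..<N} (x, y))"
    unfolding D .
  then show ?thesis
    by (rule eventually_mono) (auto simp: marginal_eq_nn_integral_PiM intro: nn_integral_cong_AE)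
qed

end

theorem lemma4:
  fixes M :: "'a measure" and N m :: nat and P :: "(nat \<Rightarrow> 'a) \<Rightarrow> real"
    and A :: "'a set" and \<gamma> :: "'a \<Rightarrow> real"
  assumes "complete_measure M" and "sigma_finite_measure M"
    and "emeasure M (space M) \<noteq> 0"
    and "N \<ge> 2" and "sym_prob_density M N P"
    and "1 \<le> m" and "m \<le> N - 1"
    and "A \<in> sets M" and "emeasure M A > 0"
    and "\<gamma> \<in> borel_measurable (restrict_space M A)" and "\<forall>a\<in>A. \<gamma> a > 0"
    and "AE x in cprod M {..<N}. x (N - 1) \<in> A \<longrightarrow>
           ennreal (\<gamma> (x (N - 1))) * marginal M N P (N - 1) x \<le> ennreal (P x)"
  shows "AE x in cprod M {..<N}. (\<forall>i\<in>{m..<N}. x i \<in> A) \<longrightarrow>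
           ennreal (\<Prod>i\<in>{m..<N}. \<gamma> (x i)) * marginal M N P m x \<le> ennreal (P x)"
proof -
  interpret sigma_finite_measure M by fact
  let ?L = "PiM {..<N} (\<lambda>_. M)"
  define n where "n = N - 1"
  have N: "N = Suc n" and mn: "m \<le> n"
    using assms(4,7) by (simp_all add: n_def)
  then have "n \<le> N" "m \<le> N"
    by simp_all
  have P: "P \<in> borel_measurable (completion ?L)"
    and P_sym: "\<And>x \<sigma>. x \<in> space ?L \<Longrightarrow> \<sigma> permutes {..<N} \<Longrightarrow> P (x \<circ> \<sigma>) = P x"
    using assms(5) by (simp_all add: sym_prob_density_def cprod_def)
  obtain f where f: "f \<in> borel_measurable ?L"
    and f_sym: "\<And>x \<sigma>. x \<in> space ?L \<Longrightarrow> \<sigma> permutes {..<N} \<Longrightarrow> f (x \<circ> \<sigma>) = f x"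
    and Pf: "AE x in ?L. P x = f x"
    using symmetric_borel_representative[OF finite_lessThan P P_sym] by blast
  have "AE x in ?L. x n \<in> A \<longrightarrow> ennreal (\<gamma> (x n)) * marginal M N f n x \<le> ennreal (f x)"
    using assms(12)[unfolded cprod_def AE_completion_iff] AE_marginal_cong[OF Pf \<open>n \<le> N\<close>] Pf
    by eventually_elim (auto simp: N)
  from AE_prod_mult_marginal_le[OF f[unfolded N] f_sym[unfolded N] mn this[unfolded N]]
  have "AE x in ?L. (\<forall>i\<in>{m..<N}. x i \<in> A) \<longrightarrow>
      (\<Prod>i\<in>{m..<N}. ennreal (\<gamma> (x i))) * marginal M N f m x \<le> ennreal (f x)"
    unfolding N .
  then have "AE x in ?L. (\<forall>i\<in>{m..<N}. x i \<in> A) \<longrightarrow>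
      ennreal (\<Prod>i\<in>{m..<N}. \<gamma> (x i)) * marginal M N P m x \<le> ennreal (P x)"
    using AE_marginal_cong[OF Pf \<open>m \<le> N\<close>] Pf
  proof eventually_elim
    case (elim x)
    have "(\<Prod>i\<in>{m..<N}. ennreal (\<gamma> (x i))) = ennreal (\<Prod>i\<in>{m..<N}. \<gamma> (x i))"
      if "\<forall>i\<in>{m..<N}. x i \<in> A"
      using that assms(11) by (intro prod_ennreal) (auto intro: less_imp_le)
    then show ?case
      using elim by simp
  qed
  then show ?thesis
    unfolding cprod_def AE_completion_iff .
qed

end
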